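(* Let $H(p,x,\omega)$ be quasiconvex satisfying (A1)–(A3), with effective Hamiltonian $\overline H$. Fix $p_0\in\mathbb R^d$. Then there is an event $\widetilde\Omega\subseteq\Omega$ with $\mathbb P[\widetilde\Omega]=1$ such that for every $(\epsilon,R,\omega)\in(0,1)\times(0,\infty)\times\widetilde\Omega$ there is $\gamma_0=\gamma_0(p_0,\epsilon,R,\omega)>0$ such that for all $0<\lambda<\gamma_0$ and all $x\in B_{R/\lambda}(0)$, $$p_0+D^-v_\lambda(x,p_0,\omega)\subseteq\{q\in\mathbb R^d:H(q,x,\omega)<\overline H(p_0)+\epsilon\},$$ where $v_\lambda(x,p_0,\omega)$ is the unique viscosity solution of $\lambda v_\lambda+H(p_0+Dv_\lambda,x,\omega)=0$ in $\mathbb R^d$.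
   Context: Setting: $(\Omega,\mathcal F,\mathbb P)$ is a probability space with an ergodic group $\{\tau_x\}_{x\in\mathbb R^d}$ of measure-preserving maps ($\tau_{y+z}=\tau_y\circ\tau_z$). (A1) $H(p,y,\tau_z\omega)=H(p,y+z,\omega)$; (A2) $\liminf_{|p|\to\infty}\operatorname{ess\,inf}_{(x,\omega)}|H(p,x,\omega)|=\infty$; (A3) for each $\omega$ and compact $K$ there is a modulus $\rho$ with $|H(p,x,\omega)-H(q,y,\omega)|\le\rho(|p-q|+|x-y|)$ for $p,q\in K$, $x,y\in\mathbb R^d$, and $H$ bounded on $K\times\mathbb R^d\times\Omega$. Quasiconvex: for each $(x,\omega)$, $p\mapsto H(p,x,\omega)$ has convex sublevel sets. A quasiconvex $H$ satisfying (A1)–(A3) is (by known results) regularly homogenizable at every $p$: there is $\overline H(p)$ with $\mathbb P[\limsup_{\lambda\to0}\max_{|x|\le R/\lambda}|\lambda v_\lambda(x,p,\omega)+\overline H(p)|=0\ \forall R>0]=1$; $\overline H$ is the effective Hamiltonian. For continuous $f$, $D^-f(x_0)=\{p:\liminf_{x\to x_0}\frac{f(x)-f(x_0)-p\cdot(x-x_0)}{|x-x_0|}\ge0\}$. *)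

theory Defs
  imports "HOL-Probability.Probability"
begin

definition measure_preserving_map :: "'w measure \<Rightarrow> ('w \<Rightarrow> 'w) \<Rightarrow> bool" where
  "measure_preserving_map M T \<longleftrightarrow> T \<in> measurable M M \<and> distr M M T = M"

definition ergodic_group :: "'w measure \<Rightarrow> ('a::euclidean_space \<Rightarrow> 'w \<Rightarrow> 'w) \<Rightarrow> bool" where
  "ergodic_group M \<tau> \<longleftrightarrow>
     (\<forall>x. measure_preserving_map M (\<tau> x)) \<and>
     (\<forall>\<omega>\<in>space M. \<tau> 0 \<omega> = \<omega>) \<and>
     (\<forall>y z. \<forall>\<omega>\<in>space M. \<tau> (y + z) \<omega> = \<tau> y (\<tau> z \<omega>)) \<and>
     (\<forall>A\<in>sets M. (\<forall>x. \<tau> x -` A \<inter> space M = A) \<longrightarrow>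
        measure M A = 0 \<or> measure M A = 1)"

definition modulus :: "(real \<Rightarrow> real) \<Rightarrow> bool" where
  "modulus \<rho> \<longleftrightarrow> (\<forall>r\<ge>0. \<rho> r \<ge> 0) \<and> \<rho> 0 = 0 \<and> (\<rho> \<longlongrightarrow> 0) (at_right 0)"

definition A1 :: "'w measure \<Rightarrow> ('a::euclidean_space \<Rightarrow> 'w \<Rightarrow> 'w) \<Rightarrow> ('a \<Rightarrow> 'a \<Rightarrow> 'w \<Rightarrow> real) \<Rightarrow> bool" where
  "A1 M \<tau> H \<longleftrightarrow> (\<forall>p y z. \<forall>\<omega>\<in>space M. H p y (\<tau> z \<omega>) = H p (y + z) \<omega>)"

text \<open>(A2) uniform coercivity: liminf as |p| goes to infinity of the essential infimum
  over (x,omega) (w.r.t. Lebesgue times P) of |H(p,x,omega)| is infinite.\<close>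
definition A2 :: "'w measure \<Rightarrow> ('a::euclidean_space \<Rightarrow> 'a \<Rightarrow> 'w \<Rightarrow> real) \<Rightarrow> bool" where
  "A2 M H \<longleftrightarrow> (\<forall>C::real. \<exists>K. \<forall>p. norm p \<ge> K \<longrightarrow>
      (AE z in (lborel \<Otimes>\<^sub>M M). C \<le> \<bar>H p (fst z) (snd z)\<bar>))"

definition A3 :: "'w measure \<Rightarrow> ('a::euclidean_space \<Rightarrow> 'a \<Rightarrow> 'w \<Rightarrow> real) \<Rightarrow> bool" where
  "A3 M H \<longleftrightarrow>
     (\<forall>\<omega>\<in>space M. \<forall>K. compact K \<longrightarrow> (\<exists>\<rho>. modulus \<rho> \<and>
        (\<forall>p\<in>K. \<forall>q\<in>K. \<forall>x y. \<bar>H p x \<omega> - H q y \<omega>\<bar> \<le> \<rho> (norm (p - q) + norm (x - y))))) \<and>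
     (\<forall>K. compact K \<longrightarrow> (\<exists>C. \<forall>p\<in>K. \<forall>x. \<forall>\<omega>\<in>space M. \<bar>H p x \<omega>\<bar> \<le> C))"

definition quasiconvex_H :: "'w measure \<Rightarrow> ('a::euclidean_space \<Rightarrow> 'a \<Rightarrow> 'w \<Rightarrow> real) \<Rightarrow> bool" where
  "quasiconvex_H M H \<longleftrightarrow> (\<forall>x. \<forall>\<omega>\<in>space M. \<forall>c. convex {p. H p x \<omega> \<le> c})"

definition C1_grad :: "('a::euclidean_space \<Rightarrow> real) \<Rightarrow> ('a \<Rightarrow> 'a) \<Rightarrow> bool" where
  "C1_grad \<phi> D\<phi> \<longleftrightarrow> (\<forall>x. (\<phi> has_derivative (\<lambda>h. D\<phi> x \<bullet> h)) (at x)) \<and> continuous_on UNIV D\<phi>"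

definition visc_sub :: "('a::euclidean_space \<Rightarrow> real \<Rightarrow> 'a \<Rightarrow> real) \<Rightarrow> ('a \<Rightarrow> real) \<Rightarrow> bool" where
  "visc_sub F u \<longleftrightarrow> continuous_on UNIV u \<and>
     (\<forall>\<phi> D\<phi> x0. C1_grad \<phi> D\<phi> \<and> (\<exists>e>0. \<forall>y\<in>ball x0 e. u y - \<phi> y \<le> u x0 - \<phi> x0)
        \<longrightarrow> F x0 (u x0) (D\<phi> x0) \<le> 0)"

definition visc_super :: "('a::euclidean_space \<Rightarrow> real \<Rightarrow> 'a \<Rightarrow> real) \<Rightarrow> ('a \<Rightarrow> real) \<Rightarrow> bool" where
  "visc_super F u \<longleftrightarrow> continuous_on UNIV u \<and>
     (\<forall>\<phi> D\<phi> x0. C1_grad \<phi> D\<phi> \<and> (\<exists>e>0. \<forall>y\<in>ball x0 e. u y - \<phi> y \<ge> u x0 - \<phi> x0)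
        \<longrightarrow> F x0 (u x0) (D\<phi> x0) \<ge> 0)"

definition visc_sol :: "('a::euclidean_space \<Rightarrow> real \<Rightarrow> 'a \<Rightarrow> real) \<Rightarrow> ('a \<Rightarrow> real) \<Rightarrow> bool" where
  "visc_sol F u \<longleftrightarrow> visc_sub F u \<and> visc_super F u"

definition subdiff :: "('a::euclidean_space \<Rightarrow> real) \<Rightarrow> 'a \<Rightarrow> 'a set" where
  "subdiff f x0 = {p. Liminf (at x0)
      (\<lambda>x. ereal ((f x - f x0 - p \<bullet> (x - x0)) / norm (x - x0))) \<ge> 0}"

definition is_discounted_sol ::
  "'w measure \<Rightarrow> ('a::euclidean_space \<Rightarrow> 'a \<Rightarrow> 'w \<Rightarrow> real) \<Rightarrow> (real \<Rightarrow> 'a \<Rightarrow> 'a \<Rightarrow> 'w \<Rightarrow> real) \<Rightarrow> bool" where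
  "is_discounted_sol M H v \<longleftrightarrow>
     (\<forall>l>0. \<forall>p. \<forall>\<omega>\<in>space M.
        bounded (range (\<lambda>x. v l x p \<omega>)) \<and>
        visc_sol (\<lambda>x r q. l * r + H (p + q) x \<omega>) (\<lambda>x. v l x p \<omega>))"

definition reg_homog ::
  "'w measure \<Rightarrow> (real \<Rightarrow> 'a::euclidean_space \<Rightarrow> 'a \<Rightarrow> 'w \<Rightarrow> real) \<Rightarrow> 'a \<Rightarrow> real \<Rightarrow> bool" where
  "reg_homog M v p Hb \<longleftrightarrow>
     (AE \<omega> in M. \<forall>R>0. \<forall>e>0. \<exists>\<gamma>>0. \<forall>l. 0 < l \<and> l < \<gamma> \<longrightarrow>
        (\<forall>x. norm x \<le> R / l \<longrightarrow> \<bar>l * v l x p \<omega> + Hb\<bar> \<le> e))"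

end

theory Submission
  imports Defs
begin

text \<open>For a quasiconvex, coercive Hamiltonian \<open>G\<close> that is uniformly continuous in \<open>x\<close>, every
  subgradient \<open>q\<close> of a bounded viscosity subsolution \<open>u\<close> of \<open>\<lambda>u + G(Du, x) = 0\<close> at \<open>x\<^sub>0\<close>
  satisfies \<open>G(q, x\<^sub>0) \<le> -\<lambda>u(x\<^sub>0)\<close>. Otherwise a hyperplane separates \<open>q\<close> from a slightly
  larger sublevel set of \<open>G(\<cdot>, x\<^sub>0)\<close>; coercivity and connectedness keep \<open>G(\<cdot>, x)\<close> above a
  level exceeding \<open>-\<lambda>u(x\<^sub>0)\<close> on the whole half-space for \<open>x\<close> near \<open>x\<^sub>0\<close>; and a test function
  touching \<open>u\<close> from above near \<open>x\<^sub>0\<close>, with gradient in that half-space, violates the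
  subsolution inequality. Almost surely (A2) and (A3) make \<open>H(\<cdot>, \<cdot>, \<omega>)\<close> coercive uniformly in
  \<open>x\<close>, and regular homogenization makes \<open>-\<lambda>v\<^sub>\<lambda>\<close> uniformly close to \<open>Hbar p\<^sub>0\<close> on
  \<open>B(0, R/\<lambda>)\<close>. Stationarity and ergodicity enter only through the assumed regular
  homogenization.\<close>

definition uniformly_coercive :: "('a::real_normed_vector \<Rightarrow> 'b \<Rightarrow> real) \<Rightarrow> bool" where
  "uniformly_coercive G \<longleftrightarrow> (\<forall>C. \<exists>K. \<forall>p x. K \<le> norm p \<longrightarrow> C \<le> \<bar>G p x\<bar>)"

lemma uniformly_coerciveI_nat:
  assumes "\<And>n::nat. \<exists>K. \<forall>p x. K \<le> norm p \<longrightarrow> real n \<le> \<bar>G p x\<bar>"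
  shows "uniformly_coercive G"
  unfolding uniformly_coercive_def
proof
  fix C :: real
  obtain K where "\<forall>p x. K \<le> norm p \<longrightarrow> real (nat \<lceil>C\<rceil>) \<le> \<bar>G p x\<bar>" using assms by blast
  moreover have "C \<le> real (nat \<lceil>C\<rceil>)" by linarith
  ultimately show "\<exists>K. \<forall>p x. K \<le> norm p \<longrightarrow> C \<le> \<bar>G p x\<bar>" by (meson order_trans)
qed

lemma uniformly_coercive_translate:
  assumes "uniformly_coercive G"
  shows "uniformly_coercive (\<lambda>p x. G (p0 + p) x)"
  unfolding uniformly_coercive_def
proof
  fix C
  obtain K where K: "\<And>p x. K \<le> norm p \<Longrightarrow> C \<le> \<bar>G p x\<bar>"
    using assms unfolding uniformly_coercive_def by blast
  have "K \<le> norm (p0 + p)" if "K + norm p0 \<le> norm p" for p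
    using that norm_triangle_ineq2[of p "- p0"] by (simp add: add.commute)
  then show "\<exists>K. \<forall>p x. K \<le> norm p \<longrightarrow> C \<le> \<bar>G (p0 + p) x\<bar>" using K by blast
qed

lemma modulus_eventually_less:
  assumes "modulus \<rho>" "\<delta> > 0"
  obtains r where "r > 0" "\<And>t. 0 \<le> t \<Longrightarrow> t < r \<Longrightarrow> \<rho> t < \<delta>"
proof -
  have "(\<rho> \<longlongrightarrow> 0) (at_right 0)" "\<rho> 0 = 0" using assms(1) by (auto simp: modulus_def)
  then have "eventually (\<lambda>t. \<rho> t < \<delta>) (at_right 0)"
    using assms(2) by (simp add: order_tendstoD(2))
  then obtain r where "r > 0" "\<And>t. t > 0 \<Longrightarrow> t < r \<Longrightarrow> \<rho> t < \<delta>"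
    unfolding eventually_at_right_field by auto
  with \<open>\<rho> 0 = 0\<close> assms(2) show thesis
    using that by (metis order_le_less)
qed

lemma isCont_of_modulus:
  fixes f :: "'b::metric_space \<Rightarrow> real"
  assumes "modulus \<rho>" "\<And>y. dist y z < 1 \<Longrightarrow> \<bar>f y - f z\<bar> \<le> \<rho> (dist y z)"
  shows "isCont f z"
  unfolding continuous_at_eps_delta
proof (intro allI impI)
  fix \<theta> :: real assume "\<theta> > 0"
  then obtain r where r: "r > 0" "\<And>t. 0 \<le> t \<Longrightarrow> t < r \<Longrightarrow> \<rho> t < \<theta>"
    using modulus_eventually_less[OF assms(1)] by blast
  have "dist (f y) (f z) < \<theta>" if "dist y z < min 1 r" for y
    using that assms(2)[of y] r(2)[of "dist y z"] by (simp add: dist_real_def)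
  then show "\<exists>d>0. \<forall>y. dist y z < d \<longrightarrow> dist (f y) (f z) < \<theta>"
    using r(1) by (intro exI[of _ "min 1 r"]) auto
qed

lemma A3_modulus:
  assumes "A3 M H" "\<omega> \<in> space M" "compact K"
  obtains \<rho> where "modulus \<rho>"
    "\<And>p q x y. p \<in> K \<Longrightarrow> q \<in> K \<Longrightarrow> \<bar>H p x \<omega> - H q y \<omega>\<bar> \<le> \<rho> (norm (p - q) + norm (x - y))"
  using assms unfolding A3_def by metis

lemma A3_continuous_in_p:
  assumes "A3 M H" "\<omega> \<in> space M"
  shows "continuous_on UNIV (\<lambda>p. H p x \<omega>)"
proof (intro continuous_at_imp_continuous_on ballI)
  fix p1
  obtain \<rho> where \<rho>: "modulus \<rho>"
    "\<And>p q x y. p \<in> cball p1 1 \<Longrightarrow> q \<in> cball p1 1 \<Longrightarrow> \<bar>H p x \<omega> - H q y \<omega>\<bar> \<le> \<rho> (norm (p - q) + norm (x - y))"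
    using A3_modulus[OF assms compact_cball] by blast
  show "isCont (\<lambda>p. H p x \<omega>) p1"
  proof (rule isCont_of_modulus[OF \<rho>(1)])
    fix p assume "dist p p1 < 1"
    then have "p \<in> cball p1 1" by (simp add: dist_commute)
    then show "\<bar>H p x \<omega> - H p1 x \<omega>\<bar> \<le> \<rho> (dist p p1)"
      using \<rho>(2)[of p p1 x x] by (simp add: dist_norm)
  qed
qed

lemma A3_continuous_in_x:
  assumes "A3 M H" "\<omega> \<in> space M"
  shows "continuous_on UNIV (\<lambda>x. H p x \<omega>)"
proof (intro continuous_at_imp_continuous_on ballI)
  fix x1
  obtain \<rho> where \<rho>: "modulus \<rho>"
    "\<And>p' q x y. p' \<in> {p} \<Longrightarrow> q \<in> {p} \<Longrightarrow> \<bar>H p' x \<omega> - H q y \<omega>\<bar> \<le> \<rho> (norm (p' - q) + norm (x - y))"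
    using A3_modulus[OF assms compact_sing] by blast
  show "isCont (\<lambda>x. H p x \<omega>) x1"
  proof (rule isCont_of_modulus[OF \<rho>(1)])
    fix x show "\<bar>H p x \<omega> - H p x1 \<omega>\<bar> \<le> \<rho> (dist x x1)"
      using \<rho>(2)[of p p x x1] by (simp add: dist_norm)
  qed
qed

lemma AE_lborel_le_imp_le:
  fixes f :: "'a::euclidean_space \<Rightarrow> real"
  assumes cont: "continuous_on UNIV f" and ae: "AE x in lborel. c \<le> f x"
  shows "c \<le> f x"
proof (rule ccontr)
  assume "\<not> c \<le> f x"
  define S where "S = f -` {..<c}"
  have "open S" unfolding S_def using cont open_vimage open_lessThan by blast
  obtain N where N: "N \<in> null_sets lborel" "{x \<in> space lborel. \<not> c \<le> f x} \<subseteq> N"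
    using ae unfolding eventually_ae_filter by auto
  have "S \<subseteq> N" using N(2) by (auto simp: S_def)
  with \<open>open S\<close> have "S \<in> null_sets lborel" using null_sets_subset[OF N(1)] by simp
  then have "negligible S" by (simp add: negligible_iff_null_sets null_sets_completionI)
  moreover have "x \<in> S" using \<open>\<not> c \<le> f x\<close> by (auto simp: S_def)
  ultimately show False using open_not_negligible \<open>open S\<close> by blast
qed

lemma AE_pair_lborel_swap:
  fixes M :: "'w measure"
  assumes "sigma_finite_measure M" and ae: "AE z in (lborel \<Otimes>\<^sub>M M). P (fst z) (snd z :: 'w)"
  shows "AE \<omega> in M. AE (x::'a::euclidean_space) in lborel. P x \<omega>"
proof -
  interpret sigma_finite_measure M by fact
  interpret P1: pair_sigma_finite lborel M
    by (simp add: pair_sigma_finite_def lborel.sigma_finite_measure_axioms sigma_finite_measure_axioms)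
  interpret P2: pair_sigma_finite M lborel
    by (simp add: pair_sigma_finite_def lborel.sigma_finite_measure_axioms sigma_finite_measure_axioms)
  have "AE z in distr (M \<Otimes>\<^sub>M lborel) (lborel \<Otimes>\<^sub>M M) (\<lambda>(x, y). (y, x)). P (fst z) (snd z)"
    using ae P1.distr_pair_swap by metis
  then have "AE z in (M \<Otimes>\<^sub>M lborel). P (snd z) (fst z)"
    using AE_distrD[OF measurable_pair_swap'[of M lborel], of "\<lambda>z. P (fst z) (snd z)"]
    by (simp add: case_prod_beta)
  then show ?thesis using P2.AE_pair by fastforce
qed

lemma dense_lower_bound_outside_ball:
  fixes f :: "'a::real_normed_vector \<Rightarrow> real"
  assumes "continuous_on UNIV f" and dense: "\<And>X. open X \<Longrightarrow> X \<noteq> {} \<Longrightarrow> \<exists>d\<in>D. d \<in> X"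
    and bound: "\<And>d. d \<in> D \<Longrightarrow> K \<le> norm d \<Longrightarrow> C \<le> f d" and "K < norm p"
  shows "C \<le> f p"
proof (rule ccontr)
  assume "\<not> C \<le> f p"
  define U where "U = {p. K < norm p} \<inter> f -` {..<C}"
  have "open U"
    unfolding U_def using assms(1)
    by (intro open_Int open_vimage open_Collect_less) (auto intro: continuous_intros)
  moreover have "p \<in> U" using \<open>\<not> C \<le> f p\<close> \<open>K < norm p\<close> by (simp add: U_def)
  ultimately obtain d where "d \<in> D" "d \<in> U" using dense by blast
  then show False using bound by (force simp: U_def)
qed

text \<open>(A2) bounds \<open>|H p x \<omega>|\<close> only for almost every \<open>(x, \<omega>)\<close> and each fixed \<open>p\<close>; continuity
  in \<open>x\<close>, and in \<open>p\<close> over a countable dense set of momenta, removes the exceptional sets.\<close>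

lemma A2_AE_uniformly_coercive:
  fixes H :: "'a::euclidean_space \<Rightarrow> 'a \<Rightarrow> 'w \<Rightarrow> real"
  assumes "sigma_finite_measure M" "A2 M H" "A3 M H"
  shows "AE \<omega> in M. uniformly_coercive (\<lambda>p x. H p x \<omega>)"
proof -
  obtain D :: "'a set" where D: "countable D" "\<And>X. open X \<Longrightarrow> X \<noteq> {} \<Longrightarrow> \<exists>d\<in>D. d \<in> X"
    using countable_dense_setE by blast
  have "AE \<omega> in M. \<exists>K. \<forall>p x. K \<le> norm p \<longrightarrow> real n \<le> \<bar>H p x \<omega>\<bar>" for n :: nat
  proof -
    obtain K where K: "\<And>p. K \<le> norm p \<Longrightarrow> AE z in (lborel \<Otimes>\<^sub>M M). real n \<le> \<bar>H p (fst z) (snd z)\<bar>"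
      using assms(2) unfolding A2_def by blast
    define D' where "D' = {d\<in>D. K \<le> norm d}"
    have "countable D'" using D(1) by (simp add: D'_def)
    have "\<forall>d\<in>D'. AE \<omega> in M. AE x in lborel. real n \<le> \<bar>H d x \<omega>\<bar>"
      using AE_pair_lborel_swap[OF assms(1) K] by (simp add: D'_def)
    then have "AE \<omega> in M. \<forall>d\<in>D'. AE x in lborel. real n \<le> \<bar>H d x \<omega>\<bar>"
      by (simp only: AE_ball_countable[OF \<open>countable D'\<close>])
    with AE_space show ?thesis
    proof eventually_elim
      case (elim \<omega>)
      have on_dense: "real n \<le> \<bar>H d x \<omega>\<bar>" if "d \<in> D" "K \<le> norm d" for d x
      proof (rule AE_lborel_le_imp_le[where f="\<lambda>x. \<bar>H d x \<omega>\<bar>"])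
        show "continuous_on UNIV (\<lambda>x. \<bar>H d x \<omega>\<bar>)"
          using A3_continuous_in_x[OF assms(3) elim(1)] by (intro continuous_intros)
        show "AE x in lborel. real n \<le> \<bar>H d x \<omega>\<bar>" using elim(2) that by (simp add: D'_def)
      qed
      have "real n \<le> \<bar>H p x \<omega>\<bar>" if "K < norm p" for p x
      proof (rule dense_lower_bound_outside_ball[where f="\<lambda>p. \<bar>H p x \<omega>\<bar>", OF _ D(2)])
        show "continuous_on UNIV (\<lambda>p. \<bar>H p x \<omega>\<bar>)"
          using A3_continuous_in_p[OF assms(3) elim(1)] by (intro continuous_intros)
      qed (use on_dense that in auto)
      then have "\<forall>p x. K + 1 \<le> norm p \<longrightarrow> real n \<le> \<bar>H p x \<omega>\<bar>" by auto
      then show ?case by blast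
    qed
  qed
  then have "AE \<omega> in M. \<forall>n::nat. \<exists>K. \<forall>p x. K \<le> norm p \<longrightarrow> real n \<le> \<bar>H p x \<omega>\<bar>"
    by (simp only: AE_all_countable) blast
  then show ?thesis by (rule eventually_mono) (rule uniformly_coerciveI_nat, blast)
qed

lemma C1_grad_test_function:
  fixes e x0 :: "'a::euclidean_space"
  assumes e1: "norm e = 1"
  defines "yv \<equiv> \<lambda>x. (x - x0) - (e \<bullet> (x - x0)) *\<^sub>R e"
  shows "C1_grad (\<lambda>x. c * (e \<bullet> (x - x0)) + M * (yv x \<bullet> yv x) + B * exp (- L * (e \<bullet> (x - x0) + r)))
           (\<lambda>x. (c - L * (B * exp (- L * (e \<bullet> (x - x0) + r)))) *\<^sub>R e + (2 * M) *\<^sub>R yv x)"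
proof -
  have ee: "e \<bullet> e = 1" using e1 by (simp add: dot_square_norm)
  have ye: "yv x \<bullet> e = 0" for x
    unfolding yv_def by (simp add: inner_diff_left inner_diff_right inner_commute ee)
  have "((\<lambda>x. c * (e \<bullet> (x - x0)) + M * (yv x \<bullet> yv x) + B * exp (- L * (e \<bullet> (x - x0) + r)))
      has_derivative (\<lambda>h. ((c - L * (B * exp (- L * (e \<bullet> (x - x0) + r)))) *\<^sub>R e + (2 * M) *\<^sub>R yv x) \<bullet> h))
      (at x)" for x
  proof -
    have "((\<lambda>x. c * (e \<bullet> (x - x0)) + M * (yv x \<bullet> yv x) + B * exp (- L * (e \<bullet> (x - x0) + r)))
      has_derivative (\<lambda>h. c * (e \<bullet> h) + M * (yv x \<bullet> (h - (e \<bullet> h) *\<^sub>R e) + (h - (e \<bullet> h) *\<^sub>R e) \<bullet> yv x)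
          + B * (exp (- L * (e \<bullet> (x - x0) + r)) * (- L * (e \<bullet> h))))) (at x)"
      unfolding yv_def
      by (rule derivative_eq_intros refl | simp)+ (simp add: algebra_simps)
    moreover have "(\<lambda>h. c * (e \<bullet> h) + M * (yv x \<bullet> (h - (e \<bullet> h) *\<^sub>R e) + (h - (e \<bullet> h) *\<^sub>R e) \<bullet> yv x)
          + B * (exp (- L * (e \<bullet> (x - x0) + r)) * (- L * (e \<bullet> h))))
       = (\<lambda>h. ((c - L * (B * exp (- L * (e \<bullet> (x - x0) + r)))) *\<^sub>R e + (2 * M) *\<^sub>R yv x) \<bullet> h)"
      using ye[of x]
      by (auto simp: inner_diff_right inner_diff_left inner_add_left inner_commute algebra_simps)
    ultimately show ?thesis by simp
  qed
  then show ?thesis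
    unfolding C1_grad_def yv_def by (auto intro!: continuous_intros)
qed

lemma norm_le_component_plus_orthogonal:
  fixes e v :: "'a::real_inner"
  assumes "norm e = 1"
  shows "norm v \<le> \<bar>e \<bullet> v\<bar> + norm (v - (e \<bullet> v) *\<^sub>R e)"
  using norm_triangle_ineq[of "(e \<bullet> v) *\<^sub>R e" "v - (e \<bullet> v) *\<^sub>R e"] assms by simp

lemma compact_cylinder:
  fixes e x0 :: "'a::euclidean_space"
  assumes e1: "norm e = 1"
  shows "compact {x. a \<le> e \<bullet> (x - x0) \<and> e \<bullet> (x - x0) \<le> b \<and>
                     norm ((x - x0) - (e \<bullet> (x - x0)) *\<^sub>R e) \<le> \<rho>}" (is "compact ?Z")
proof (subst compact_eq_bounded_closed, intro conjI)
  have "norm (x - x0) \<le> \<bar>a\<bar> + \<bar>b\<bar> + \<rho>" if "x \<in> ?Z" for x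
  proof -
    have "\<bar>e \<bullet> (x - x0)\<bar> \<le> \<bar>a\<bar> + \<bar>b\<bar>" using that by auto
    moreover have "norm ((x - x0) - (e \<bullet> (x - x0)) *\<^sub>R e) \<le> \<rho>" using that by simp
    ultimately show ?thesis using norm_le_component_plus_orthogonal[OF e1, of "x - x0"] by linarith
  qed
  then have "?Z \<subseteq> cball x0 (\<bar>a\<bar> + \<bar>b\<bar> + \<rho>)" by (simp add: subset_iff dist_norm norm_minus_commute)
  then show "bounded ?Z" using bounded_cball bounded_subset by blast
  show "closed ?Z"
    by (intro closed_Collect_conj closed_Collect_le continuous_intros)
qed

lemma subdiff_lower_bound:
  fixes u :: "'a::euclidean_space \<Rightarrow> real"
  assumes "q \<in> subdiff u x0" "\<epsilon> > 0"
  obtains r where "r > 0"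
    "\<And>x. dist x x0 < r \<Longrightarrow> u x0 + q \<bullet> (x - x0) - \<epsilon> * norm (x - x0) \<le> u x"
proof -
  have "0 \<le> Liminf (at x0) (\<lambda>x. ereal ((u x - u x0 - q \<bullet> (x - x0)) / norm (x - x0)))"
    using assms(1) by (simp add: subdiff_def)
  moreover have "ereal (- \<epsilon>) < 0" using assms(2) by simp
  ultimately have "\<forall>\<^sub>F x in at x0. ereal (- \<epsilon>) < ereal ((u x - u x0 - q \<bullet> (x - x0)) / norm (x - x0))"
    unfolding le_Liminf_iff by blast
  then obtain r where r: "r > 0" and
    quotient: "\<And>x. x \<noteq> x0 \<Longrightarrow> dist x x0 < r \<Longrightarrow> - \<epsilon> < (u x - u x0 - q \<bullet> (x - x0)) / norm (x - x0)"
    unfolding eventually_at by auto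
  have "u x0 + q \<bullet> (x - x0) - \<epsilon> * norm (x - x0) \<le> u x" if "dist x x0 < r" for x
  proof (cases "x = x0")
    case False
    then have "norm (x - x0) > 0" by simp
    with quotient[OF False that] show ?thesis by (simp add: pos_less_divide_eq)
  qed simp
  with r that show thesis by blast
qed

lemma compact_local_max_in_open:
  fixes F :: "'a::metric_space \<Rightarrow> real"
  assumes "compact D" "continuous_on D F" "open U" "U \<subseteq> D" "x1 \<in> D"
    and "\<And>x. x \<in> D - U \<Longrightarrow> F x < F x1"
  obtains xs where "xs \<in> U" "\<exists>d>0. \<forall>y\<in>ball xs d. F y \<le> F xs"
proof -
  obtain xs where xs: "xs \<in> D" "\<forall>z\<in>D. F z \<le> F xs"
    using continuous_attains_sup[OF assms(1) _ assms(2)] assms(5) by blast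
  have "xs \<in> U" using assms(5,6) xs by force
  moreover obtain d where "d > 0" "ball xs d \<subseteq> U"
    using assms(3) \<open>xs \<in> U\<close> open_contains_ball by blast
  ultimately show thesis using that xs(2) assms(4) by blast
qed

lemma inner_unit_component:
  fixes e v :: "'a::real_inner"
  assumes "norm e = 1"
  shows "e \<bullet> (a *\<^sub>R e + b *\<^sub>R (v - (e \<bullet> v) *\<^sub>R e)) = a"
  using assms by (simp add: inner_add_right inner_diff_right dot_square_norm)

lemma le_times_exp_divide:
  fixes B K :: real
  assumes "B > 0"
  shows "K \<le> B * exp (K / B)"
proof -
  have "B * (1 + K / B) \<le> B * exp (K / B)"
    using assms by (intro mult_left_mono) (auto simp: exp_ge_add_one_self)
  moreover have "B * (1 + K / B) = B + K" using assms by (simp add: field_simps)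
  ultimately show ?thesis using assms by linarith
qed


text \<open>In coordinates \<open>s = e \<bullet> (x - x\<^sub>0)\<close> and \<open>y\<close> orthogonal to \<open>e\<close>, the test function is
  \<open>c s + M |y|\<^sup>2 + \<eta> exp (-L (s + r))\<close> on the cylinder \<open>-2r \<le> s \<le> 0, |y| \<le> \<rho>\<close>. By \<open>far\<close>,
  \<open>u - \<phi>\<close> exceeds \<open>u x\<^sub>0 + 2\<eta>\<close> at \<open>x\<^sub>0 - r e\<close>; on the boundary it stays below \<open>u x\<^sub>0 + \<eta>\<close>,
  thanks to the penalty terms on \<open>s = -2r\<close> and \<open>|y| = \<rho>\<close> and to \<open>near\<close> on \<open>s = 0\<close>. At the
  resulting interior maximum, the exponential term only lowers the \<open>e\<close>-component of \<open>D\<phi>\<close>.\<close>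

lemma cylinder_test_function_touches:
  fixes u :: "'a::euclidean_space \<Rightarrow> real" and e x0 :: 'a
  assumes cont: "continuous_on UNIV u" and bnd: "\<And>x. \<bar>u x\<bar> \<le> Bu" and e1: "norm e = 1"
    and r: "r > 0" and \<rho>: "\<rho> > 0" and \<eta>: "\<eta> > 0"
    and near: "\<And>x. norm (x - x0) \<le> \<rho> \<Longrightarrow> u x < u x0 + \<eta>"
    and far: "u x0 + 3 * \<eta> \<le> u (x0 - r *\<^sub>R e) + c * r"
  obtains xs \<phi> D\<phi> where "C1_grad \<phi> D\<phi>" "\<exists>d>0. \<forall>y\<in>ball xs d. u y - \<phi> y \<le> u xs - \<phi> xs"
    "norm (xs - x0) < 2 * r + \<rho>" "e \<bullet> D\<phi> xs \<le> c"
proof -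
  define Kb where "Kb = 2 * Bu + 2 * r * \<bar>c\<bar> + 1"
  have "0 \<le> Bu" "0 \<le> 2 * r * \<bar>c\<bar>" using bnd[of x0] r by auto
  then have Kb: "Kb > 0" unfolding Kb_def by linarith
  define M where "M = Kb / \<rho>^2"
  define L where "L = (Kb / \<eta>) / r"
  have M0: "M \<ge> 0" and L0: "L > 0" using Kb \<eta> r by (simp_all add: M_def L_def)
  define sv where "sv = (\<lambda>x. e \<bullet> (x - x0))"
  define yv where "yv = (\<lambda>x. (x - x0) - (e \<bullet> (x - x0)) *\<^sub>R e)"
  define \<Psi> where "\<Psi> = (\<lambda>s. \<eta> * exp (- L * (s + r)))"
  define \<phi> where "\<phi> = (\<lambda>x. c * (e \<bullet> (x - x0)) + M * (yv x \<bullet> yv x) + \<eta> * exp (- L * (e \<bullet> (x - x0) + r)))"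
  define D\<phi> where "D\<phi> = (\<lambda>x. (c - L * (\<eta> * exp (- L * (e \<bullet> (x - x0) + r)))) *\<^sub>R e + (2 * M) *\<^sub>R yv x)"
  have C1: "C1_grad \<phi> D\<phi>" unfolding \<phi>_def D\<phi>_def yv_def by (rule C1_grad_test_function[OF e1])
  have \<phi>_eq: "\<phi> x = c * sv x + M * (norm (yv x))^2 + \<Psi> (sv x)" for x
    by (simp add: \<phi>_def sv_def \<Psi>_def power2_norm_eq_inner)
  have norm_sv_yv: "norm (x - x0) \<le> \<bar>sv x\<bar> + norm (yv x)" for x
    unfolding sv_def yv_def by (rule norm_le_component_plus_orthogonal[OF e1])
  define F where "F = (\<lambda>x. u x - \<phi> x)"
  define Dom where "Dom = {x. -2*r \<le> sv x \<and> sv x \<le> 0 \<and> norm (yv x) \<le> \<rho>}"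
  define Op where "Op = {x. -2*r < sv x \<and> sv x < 0 \<and> norm (yv x) < \<rho>}"
  have "compact Dom" unfolding Dom_def sv_def yv_def by (rule compact_cylinder[OF e1])
  have "open Op" unfolding Op_def sv_def yv_def
    by (intro open_Collect_conj open_Collect_less continuous_intros)
  have "Op \<subseteq> Dom" by (auto simp: Op_def Dom_def)
  have "continuous_on Dom F" unfolding F_def \<phi>_def yv_def
    by (intro continuous_intros continuous_on_subset[OF cont]) auto
  define x1 where "x1 = x0 - r *\<^sub>R e"
  have sx1: "sv x1 = - r" and yx1: "yv x1 = 0"
    using e1 by (simp_all add: x1_def sv_def yv_def dot_square_norm)
  have x1D: "x1 \<in> Dom" using sx1 yx1 r \<rho> by (simp add: Dom_def)
  have "F x1 = u x1 + c * r - \<eta>" using sx1 yx1 by (simp add: F_def \<phi>_eq \<Psi>_def)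
  then have Fx1: "u x0 + 2 * \<eta> \<le> F x1" using far by (simp add: x1_def)
  have boundary: "F x < u x0 + \<eta>" if x: "x \<in> Dom - Op" for x
  proof (cases "sv x = 0")
    case True
    then have "norm (x - x0) \<le> \<rho>" using norm_sv_yv[of x] x by (simp add: Dom_def)
    then have "u x < u x0 + \<eta>" by (rule near)
    moreover have "0 \<le> M * (norm (yv x))^2" "0 \<le> \<Psi> 0" using M0 \<eta> by (simp_all add: \<Psi>_def)
    then have "F x \<le> u x" using True by (simp add: F_def \<phi>_eq)
    ultimately show ?thesis by linarith
  next
    case False
    with x have "sv x = -2*r \<or> norm (yv x) = \<rho>" by (auto simp: Dom_def Op_def)
    then have "Kb \<le> M * (norm (yv x))^2 + \<Psi> (sv x)"
    proof
      assume "sv x = -2*r"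
      then have "\<Psi> (sv x) = \<eta> * exp (Kb / \<eta>)" using r by (simp add: \<Psi>_def L_def)
      then have "Kb \<le> \<Psi> (sv x)" using le_times_exp_divide[OF \<eta>] by simp
      moreover have "0 \<le> M * (norm (yv x))^2" using M0 by simp
      ultimately show ?thesis by linarith
    next
      assume "norm (yv x) = \<rho>"
      then show ?thesis using \<rho> \<eta> by (simp add: M_def \<Psi>_def)
    qed
    moreover have "F x \<le> u x + 2 * r * \<bar>c\<bar> - M * (norm (yv x))^2 - \<Psi> (sv x)"
    proof -
      have "\<bar>sv x\<bar> \<le> 2*r" using x by (auto simp: Dom_def)
      then have "\<bar>c * sv x\<bar> \<le> 2 * r * \<bar>c\<bar>"
        by (simp add: abs_mult mult_left_mono mult.commute)
      then have "- (c * sv x) \<le> 2 * r * \<bar>c\<bar>" by linarith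
      then show ?thesis by (simp add: F_def \<phi>_eq)
    qed
    moreover have "u x \<le> Bu" "- Bu \<le> u x0"
      using abs_le_D1[OF bnd[of x]] abs_le_D2[OF bnd[of x0]] by simp_all
    ultimately show ?thesis using \<eta> unfolding Kb_def by linarith
  qed
  have "F x < F x1" if "x \<in> Dom - Op" for x
    using boundary[OF that] Fx1 \<eta> by linarith
  then obtain xs where xs: "xs \<in> Op" and "\<exists>d>0. \<forall>y\<in>ball xs d. F y \<le> F xs"
    by (rule compact_local_max_in_open[OF \<open>compact Dom\<close> \<open>continuous_on Dom F\<close> \<open>open Op\<close> \<open>Op \<subseteq> Dom\<close> x1D])
  then have "\<exists>d>0. \<forall>y\<in>ball xs d. u y - \<phi> y \<le> u xs - \<phi> xs" by (simp add: F_def)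
  moreover have "norm (xs - x0) < 2 * r + \<rho>"
  proof -
    have "\<bar>sv xs\<bar> < 2*r" "norm (yv xs) < \<rho>" using xs by (auto simp: Op_def)
    then show ?thesis using norm_sv_yv[of xs] by linarith
  qed
  moreover have "e \<bullet> D\<phi> xs = c - L * (\<eta> * exp (- L * (e \<bullet> (xs - x0) + r)))"
    unfolding D\<phi>_def yv_def by (rule inner_unit_component[OF e1])
  then have "e \<bullet> D\<phi> xs \<le> c" using L0 \<eta> by simp
  ultimately show thesis using that C1 by blast
qed

lemma touching_test_function:
  fixes u :: "'a::euclidean_space \<Rightarrow> real" and e q x0 :: 'a
  assumes cont: "continuous_on UNIV u" and bnd: "\<And>x. \<bar>u x\<bar> \<le> Bu"
    and sub: "q \<in> subdiff u x0" and e1: "norm e = 1" and cq: "e \<bullet> q < c" and r0: "r0 > 0"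
  obtains xs \<phi> D\<phi> where "C1_grad \<phi> D\<phi>" "\<exists>d>0. \<forall>y\<in>ball xs d. u y - \<phi> y \<le> u xs - \<phi> xs"
    "dist xs x0 < r0" "e \<bullet> D\<phi> xs \<le> c"
proof -
  define \<epsilon> where "\<epsilon> = (c - e \<bullet> q) / 4"
  have \<epsilon>0: "\<epsilon> > 0" using cq by (simp add: \<epsilon>_def)
  obtain r1 where r1: "r1 > 0" and
    lower: "\<And>x. dist x x0 < r1 \<Longrightarrow> u x0 + q \<bullet> (x - x0) - \<epsilon> * norm (x - x0) \<le> u x"
    using subdiff_lower_bound[OF sub \<epsilon>0] by blast
  define r where "r = min (r1/2) (r0/4)"
  have r: "r > 0" "r < r1" "r \<le> r0/4" using r1 r0 by (auto simp: r_def)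
  have \<eta>: "\<epsilon> * r > 0" using \<epsilon>0 r(1) by simp
  have "isCont u x0" using cont by (simp add: continuous_on_eq_continuous_at)
  then obtain \<rho>1 where \<rho>1: "\<rho>1 > 0" and cont_x0: "\<And>x. dist x x0 < \<rho>1 \<Longrightarrow> dist (u x) (u x0) < \<epsilon> * r"
    unfolding continuous_at_eps_delta using \<eta> by blast
  define \<rho> where "\<rho> = min (\<rho>1/2) (r0/4)"
  have \<rho>: "\<rho> > 0" "\<rho> < \<rho>1" "\<rho> \<le> r0/4" using \<rho>1 r0 by (auto simp: \<rho>_def)
  have near: "u x < u x0 + \<epsilon> * r" if "norm (x - x0) \<le> \<rho>" for x
    using cont_x0[of x] that \<rho> by (simp add: dist_norm dist_real_def)
  have "u x0 + q \<bullet> (- r *\<^sub>R e) - \<epsilon> * r \<le> u (x0 - r *\<^sub>R e)"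
    using lower[of "x0 - r *\<^sub>R e"] r e1 by (simp add: dist_norm)
  moreover have "q \<bullet> (- r *\<^sub>R e) = - (r * (e \<bullet> q))" by (simp add: inner_commute)
  moreover have "c * r = r * (e \<bullet> q) + 4 * (\<epsilon> * r)" by (simp add: \<epsilon>_def field_simps)
  ultimately have far: "u x0 + 3 * (\<epsilon> * r) \<le> u (x0 - r *\<^sub>R e) + c * r" by linarith
  obtain xs \<phi> D\<phi> where C1: "C1_grad \<phi> D\<phi>" and max: "\<exists>d>0. \<forall>y\<in>ball xs d. u y - \<phi> y \<le> u xs - \<phi> xs"
      and xs: "norm (xs - x0) < 2 * r + \<rho>" and grad: "e \<bullet> D\<phi> xs \<le> c"
    by (rule cylinder_test_function_touches[OF cont bnd e1 r(1) \<rho>(1) \<eta> near far])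
  have "dist xs x0 < r0" using xs r \<rho> by (simp add: dist_norm)
  with C1 max grad show thesis using that by blast
qed


lemma unit_separating_halfspace:
  fixes S :: "'a::euclidean_space set"
  assumes "convex S" "closed S" "q \<notin> S"
  obtains e c where "norm e = 1" "e \<bullet> q < c" "\<And>p. e \<bullet> p \<le> c \<Longrightarrow> p \<notin> S"
proof -
  obtain a b where ab: "a \<bullet> q < b" "\<And>p. p \<in> S \<Longrightarrow> a \<bullet> p > b"
    using separating_hyperplane_closed_point[OF assms] by blast
  show thesis
  proof (cases "a = 0")
    case True
    with ab have "S = {}" by fastforce
    obtain i :: 'a where "i \<in> Basis" using nonempty_Basis by blast
    then show thesis using that[of i "i \<bullet> q + 1"] \<open>S = {}\<close> by simp
  next
    case False
    then have na: "norm a > 0" by simp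
    have scaled: "(a /\<^sub>R norm a) \<bullet> p = (a \<bullet> p) / norm a" for p by (simp add: divide_inverse_commute)
    show thesis
    proof (rule that[of "a /\<^sub>R norm a" "b / norm a"])
      show "norm (a /\<^sub>R norm a) = 1" using na by simp
      show "(a /\<^sub>R norm a) \<bullet> q < b / norm a"
        unfolding scaled using ab(1) na by (rule divide_strict_right_mono)
      show "p \<notin> S" if "(a /\<^sub>R norm a) \<bullet> p \<le> b / norm a" for p
        using that ab(2)[of p] na unfolding scaled by (force simp: divide_le_cancel)
    qed
  qed
qed

lemma connected_image_gap:
  fixes f :: "'a::topological_space \<Rightarrow> real"
  assumes "connected S" "continuous_on S f" "a < b"
    and gap: "\<And>p. p \<in> S \<Longrightarrow> f p \<le> a \<or> b \<le> f p"
    and "q \<in> S" "b \<le> f q" "p \<in> S"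
  shows "b \<le> f p"
proof (rule ccontr)
  assume "\<not> b \<le> f p"
  then have "f p \<le> a" using gap[OF \<open>p \<in> S\<close>] by linarith
  have "connected (f ` S)" using assms(2,1) by (rule connected_continuous_image)
  moreover have "f p \<le> (a + b) / 2" "(a + b) / 2 \<le> f q" using \<open>f p \<le> a\<close> \<open>b \<le> f q\<close> \<open>a < b\<close> by auto
  ultimately have "(a + b) / 2 \<in> f ` S"
    using \<open>p \<in> S\<close> \<open>q \<in> S\<close> by (meson connectedD_interval image_eqI)
  then show False using gap \<open>a < b\<close> by force
qed

lemma connected_lower_bound_near:
  fixes G :: "'a::euclidean_space \<Rightarrow> 'a \<Rightarrow> real"
  assumes pcont: "\<And>x. continuous_on UNIV (\<lambda>p. G p x)"
    and unif: "\<And>K. compact K \<Longrightarrow> \<exists>\<rho>. modulus \<rho> \<and> (\<forall>p\<in>K. \<forall>x y. \<bar>G p x - G p y\<bar> \<le> \<rho> (norm (x - y)))"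
    and coer: "uniformly_coercive G"
    and S: "connected S" "q \<in> S" and above: "\<And>p. p \<in> S \<Longrightarrow> b + \<delta> < G p x0" and \<delta>: "\<delta> > 0"
  obtains r where "r > 0" "\<And>x p. dist x x0 < r \<Longrightarrow> p \<in> S \<Longrightarrow> b \<le> G p x"
proof -
  define C where "C = \<bar>b\<bar> + 1"
  obtain K where K: "\<And>p x. K \<le> norm p \<Longrightarrow> C \<le> \<bar>G p x\<bar>"
    using coer unfolding uniformly_coercive_def by blast
  define K2 where "K2 = max K (norm q)"
  obtain \<rho> where \<rho>: "modulus \<rho>" "\<And>p x y. p \<in> cball 0 K2 \<Longrightarrow> \<bar>G p x - G p y\<bar> \<le> \<rho> (norm (x - y))"
    using unif[of "cball 0 K2"] by auto
  obtain r where r: "r > 0" "\<And>t. 0 \<le> t \<Longrightarrow> t < r \<Longrightarrow> \<rho> t < \<delta>"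
    using modulus_eventually_less[OF \<rho>(1) \<delta>] by blast
  have "b \<le> G p x" if x: "dist x x0 < r" and p: "p \<in> S" for x p
  proof (rule connected_image_gap[of S "\<lambda>p. G p x" "- C" b q p])
    have bounded_part: "b < G p x" if "norm p \<le> K2" "p \<in> S" for p
    proof -
      have "\<bar>G p x - G p x0\<bar> \<le> \<rho> (norm (x - x0))" using \<rho>(2) that by auto
      moreover have "\<rho> (norm (x - x0)) < \<delta>" using r(2) x by (simp add: dist_norm)
      ultimately show ?thesis using above[OF that(2)] by linarith
    qed
    show "G p x \<le> - C \<or> b \<le> G p x" if "p \<in> S" for p
    proof (cases "norm p \<le> K2")
      case True
      then show ?thesis using bounded_part that by force
    next
      case False
      then have "C \<le> \<bar>G p x\<bar>" using K by (simp add: K2_def)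
      then show ?thesis unfolding C_def by linarith
    qed
    show "b \<le> G q x" using bounded_part[of q] S(2) by (simp add: K2_def)
    show "continuous_on S (\<lambda>p. G p x)" using pcont continuous_on_subset by blast
    show "- C < b" using abs_ge_minus_self[of b] by (simp add: C_def)
  qed (fact S p)+
  with r(1) that show thesis by blast
qed

lemma visc_sub_subdiff_le:
  fixes G :: "'a::euclidean_space \<Rightarrow> 'a \<Rightarrow> real" and u :: "'a \<Rightarrow> real"
  assumes l: "l > 0" and cont: "continuous_on UNIV u" and bnd: "\<And>x. \<bar>u x\<bar> \<le> Bu"
    and sub: "visc_sub (\<lambda>x r q. l * r + G q x) u"
    and qc: "\<And>x c. convex {p. G p x \<le> c}"
    and pcont: "\<And>x. continuous_on UNIV (\<lambda>p. G p x)"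
    and unif: "\<And>K. compact K \<Longrightarrow> \<exists>\<rho>. modulus \<rho> \<and> (\<forall>p\<in>K. \<forall>x y. \<bar>G p x - G p y\<bar> \<le> \<rho> (norm (x - y)))"
    and coer: "uniformly_coercive G"
    and qs: "q \<in> subdiff u x0"
  shows "G q x0 \<le> - l * u x0"
proof (rule ccontr)
  define c0 where "c0 = - l * u x0"
  assume "\<not> G q x0 \<le> - l * u x0"
  define \<delta> where "\<delta> = (G q x0 - c0) / 3"
  have \<delta>0: "\<delta> > 0" using \<open>\<not> G q x0 \<le> - l * u x0\<close> by (simp add: \<delta>_def c0_def)
  have "convex {p. G p x0 \<le> c0 + 2 * \<delta>}" by (rule qc)
  moreover have "closed {p. G p x0 \<le> c0 + 2 * \<delta>}"
    using pcont[of x0] by (intro closed_Collect_le) (auto intro: continuous_intros)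
  moreover have "G q x0 = c0 + 3 * \<delta>" by (simp add: \<delta>_def field_simps)
  then have "q \<notin> {p. G p x0 \<le> c0 + 2 * \<delta>}" using \<delta>0 by simp
  ultimately obtain e c1 where e1: "norm e = 1" and eq: "e \<bullet> q < c1"
    and far: "\<And>p. e \<bullet> p \<le> c1 \<Longrightarrow> c0 + 2 * \<delta> < G p x0"
    by (rule unit_separating_halfspace) (use not_le in blast)
  have above: "c0 + \<delta> + \<delta> < G p x0" if "p \<in> {p. e \<bullet> p \<le> c1}" for p
    using far[of p] that by simp
  have conn: "connected {p. e \<bullet> p \<le> c1}" by (intro convex_connected convex_halfspace_le)
  have "q \<in> {p. e \<bullet> p \<le> c1}" using eq by simp
  then obtain r0 where r0: "r0 > 0"
    and halfspace: "\<And>x p. dist x x0 < r0 \<Longrightarrow> p \<in> {p. e \<bullet> p \<le> c1} \<Longrightarrow> c0 + \<delta> \<le> G p x"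
    using connected_lower_bound_near[OF pcont unif coer conn _ above \<delta>0] by blast
  have "isCont u x0" using cont by (simp add: continuous_on_eq_continuous_at)
  moreover have "\<delta> / l > 0" using \<delta>0 l by simp
  ultimately obtain r1 where r1: "r1 > 0" "\<And>x. dist x x0 < r1 \<Longrightarrow> dist (u x) (u x0) < \<delta> / l"
    unfolding continuous_at_eps_delta by metis
  have "min r0 r1 > 0" using r0 r1 by simp
  then obtain xs \<phi> D\<phi> where "C1_grad \<phi> D\<phi>" "\<exists>d>0. \<forall>y\<in>ball xs d. u y - \<phi> y \<le> u xs - \<phi> xs"
      and xs: "dist xs x0 < min r0 r1" "e \<bullet> D\<phi> xs \<le> c1"
    by (rule touching_test_function[OF cont bnd qs e1 eq])
  then have "l * u xs + G (D\<phi> xs) xs \<le> 0" using sub unfolding visc_sub_def by blast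
  moreover have "c0 + \<delta> \<le> G (D\<phi> xs) xs" using halfspace xs by simp
  moreover have "\<bar>u xs - u x0\<bar> < \<delta> / l" using r1(2)[of xs] xs(1) by (simp add: dist_real_def)
  then have "l * u x0 - l * u xs < \<delta>" using l by (simp add: field_simps abs_less_iff)
  ultimately show False by (simp add: c0_def)
qed

lemma discounted_sol_subdiff_le:
  fixes H :: "'a::euclidean_space \<Rightarrow> 'a \<Rightarrow> 'w \<Rightarrow> real"
  assumes "quasiconvex_H M H" "A3 M H" "is_discounted_sol M H v"
    and \<omega>: "\<omega> \<in> space M" and coer: "uniformly_coercive (\<lambda>p x. H p x \<omega>)"
    and l: "l > 0" and q: "q \<in> subdiff (\<lambda>y. v l y p0 \<omega>) x"
  shows "H (p0 + q) x \<omega> \<le> - l * v l x p0 \<omega>"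
proof -
  have sol: "bounded (range (\<lambda>x. v l x p0 \<omega>))"
    "visc_sol (\<lambda>x r q. l * r + H (p0 + q) x \<omega>) (\<lambda>x. v l x p0 \<omega>)"
    using assms(3) l \<omega> unfolding is_discounted_sol_def by blast+
  then have sub: "visc_sub (\<lambda>x r q. l * r + H (p0 + q) x \<omega>) (\<lambda>x. v l x p0 \<omega>)"
    by (simp add: visc_sol_def)
  then have cont: "continuous_on UNIV (\<lambda>x. v l x p0 \<omega>)" by (simp add: visc_sub_def)
  obtain Bu where Bu: "\<And>y. \<bar>v l y p0 \<omega>\<bar> \<le> Bu"
    using sol(1) unfolding bounded_iff by fastforce
  have qc: "convex {p. H (p0 + p) y \<omega> \<le> c}" for y c
  proof -
    have "convex ((+) (- p0) ` {p. H p y \<omega> \<le> c})"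
      using assms(1) \<omega> unfolding quasiconvex_H_def by (blast intro: convex_translation)
    moreover have "(+) (- p0) ` {p. H p y \<omega> \<le> c} = {p. H (p0 + p) y \<omega> \<le> c}"
      by (auto intro: image_eqI[where x="p0 + _"])
    ultimately show ?thesis by metis
  qed
  have pcont: "continuous_on UNIV (\<lambda>p. H (p0 + p) y \<omega>)" for y
    by (rule continuous_on_compose2[OF A3_continuous_in_p[OF assms(2) \<omega>]]) (auto intro: continuous_intros)
  have unif: "\<exists>\<rho>. modulus \<rho> \<and> (\<forall>p\<in>K. \<forall>x y. \<bar>H (p0 + p) x \<omega> - H (p0 + p) y \<omega>\<bar> \<le> \<rho> (norm (x - y)))"
    if K: "compact K" for K
  proof -
    obtain \<rho> where "modulus \<rho>" "\<And>p q x y. p \<in> (+) p0 ` K \<Longrightarrow> q \<in> (+) p0 ` K \<Longrightarrow>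
        \<bar>H p x \<omega> - H q y \<omega>\<bar> \<le> \<rho> (norm (p - q) + norm (x - y))"
      using A3_modulus[OF assms(2) \<omega> compact_translation[OF K]] by blast
    then show ?thesis by (metis add_0 diff_self image_eqI norm_zero)
  qed
  show ?thesis
    using visc_sub_subdiff_le[where G="\<lambda>q x. H (p0 + q) x \<omega>", OF l cont Bu sub qc pcont unif
        uniformly_coercive_translate[OF coer] q] by simp
qed

lemma discounted_sol_subdiff_bound:
  fixes H :: "'a::euclidean_space \<Rightarrow> 'a \<Rightarrow> 'w \<Rightarrow> real"
  assumes "quasiconvex_H M H" "A3 M H" "is_discounted_sol M H v"
    and \<omega>: "\<omega> \<in> space M" and coer: "uniformly_coercive (\<lambda>p x. H p x \<omega>)"
    and hom: "\<forall>R>0. \<forall>e>0. \<exists>\<gamma>>0. \<forall>l. 0 < l \<and> l < \<gamma> \<longrightarrow>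
        (\<forall>x. norm x \<le> R / l \<longrightarrow> \<bar>l * v l x p0 \<omega> + Hb\<bar> \<le> e)"
    and "e > 0" "R > 0"
  shows "\<exists>\<gamma>>0. \<forall>l. 0 < l \<and> l < \<gamma> \<longrightarrow>
    (\<forall>x\<in>ball 0 (R / l). \<forall>q\<in>subdiff (\<lambda>y. v l y p0 \<omega>) x. H (p0 + q) x \<omega> < Hb + e)"
proof -
  have "e / 2 > 0" using \<open>e > 0\<close> by simp
  then obtain \<gamma> where "\<gamma> > 0" and \<gamma>: "\<forall>l. 0 < l \<and> l < \<gamma> \<longrightarrow>
      (\<forall>x. norm x \<le> R / l \<longrightarrow> \<bar>l * v l x p0 \<omega> + Hb\<bar> \<le> e / 2)"
    using hom \<open>R > 0\<close> by blast
  have "H (p0 + q) x \<omega> < Hb + e"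
    if "0 < l" "l < \<gamma>" "x \<in> ball 0 (R / l)" "q \<in> subdiff (\<lambda>y. v l y p0 \<omega>) x" for l x q
  proof -
    have "norm x \<le> R / l" using that(3) by simp
    with \<gamma> that(1,2) have "\<bar>l * v l x p0 \<omega> + Hb\<bar> \<le> e / 2" by blast
    then have "- (l * v l x p0 \<omega> + Hb) \<le> e / 2" by (rule abs_le_D2)
    moreover have "H (p0 + q) x \<omega> \<le> - l * v l x p0 \<omega>"
      using discounted_sol_subdiff_le[OF assms(1-5) \<open>0 < l\<close> that(4)] .
    ultimately show ?thesis using \<open>e > 0\<close> by linarith
  qed
  with \<open>\<gamma> > 0\<close> show ?thesis by blast
qed

theorem mainTheorem10:
  fixes M :: "'w measure" and \<tau> :: "'a::euclidean_space \<Rightarrow> 'w \<Rightarrow> 'w"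
    and H :: "'a \<Rightarrow> 'a \<Rightarrow> 'w \<Rightarrow> real" and Hbar :: "'a \<Rightarrow> real"
    and v :: "real \<Rightarrow> 'a \<Rightarrow> 'a \<Rightarrow> 'w \<Rightarrow> real" and p0 :: 'a
  assumes "prob_space M"
    and "ergodic_group M \<tau>"
    and "quasiconvex_H M H"
    and "A1 M \<tau> H" and "A2 M H" and "A3 M H"
    and "is_discounted_sol M H v"
    and "\<forall>p. reg_homog M v p (Hbar p)"
  shows "\<exists>\<Omega>t\<in>sets M. measure M \<Omega>t = 1 \<and>
     (\<forall>\<omega>\<in>\<Omega>t. \<forall>e. 0 < e \<and> e < 1 \<longrightarrow> (\<forall>R>0. \<exists>\<gamma>0>0. \<forall>l. 0 < l \<and> l < \<gamma>0 \<longrightarrow>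
        (\<forall>x\<in>ball 0 (R / l). \<forall>q\<in>subdiff (\<lambda>y. v l y p0 \<omega>) x.
            H (p0 + q) x \<omega> < Hbar p0 + e)))"
proof -
  interpret prob_space M by fact
  have "AE \<omega> in M. uniformly_coercive (\<lambda>p x. H p x \<omega>) \<and> (\<forall>R>0. \<forall>e>0. \<exists>\<gamma>>0. \<forall>l. 0 < l \<and> l < \<gamma> \<longrightarrow>
      (\<forall>x. norm x \<le> R / l \<longrightarrow> \<bar>l * v l x p0 \<omega> + Hbar p0\<bar> \<le> e))"
    using A2_AE_uniformly_coercive[OF sigma_finite_measure_axioms assms(5,6)] assms(8)
    unfolding reg_homog_def by (auto elim: AE_mp)
  then obtain \<Omega>t where \<Omega>t: "\<Omega>t \<in> sets M" "measure M \<Omega>t = 1" and good: "\<And>\<omega>. \<omega> \<in> \<Omega>t \<Longrightarrow>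
      \<omega> \<in> space M \<and> uniformly_coercive (\<lambda>p x. H p x \<omega>) \<and> (\<forall>R>0. \<forall>e>0. \<exists>\<gamma>>0. \<forall>l. 0 < l \<and> l < \<gamma> \<longrightarrow>
        (\<forall>x. norm x \<le> R / l \<longrightarrow> \<bar>l * v l x p0 \<omega> + Hbar p0\<bar> \<le> e))"
    by (rule AE_E_prob) blast
  have "\<exists>\<gamma>0>0. \<forall>l. 0 < l \<and> l < \<gamma>0 \<longrightarrow> (\<forall>x\<in>ball 0 (R / l).
      \<forall>q\<in>subdiff (\<lambda>y. v l y p0 \<omega>) x. H (p0 + q) x \<omega> < Hbar p0 + e)"
    if \<omega>: "\<omega> \<in> \<Omega>t" and "0 < e" "R > 0" for \<omega> e R
    using good[OF \<omega>] discounted_sol_subdiff_bound[OF assms(3,6,7) _ _ _ that(2,3)] by blast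
  with \<Omega>t show ?thesis by blast
qed

end
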